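(* Let $M=(E,r)$ be a polymatroid with $|E|\ge2$ and let $a\in E$. Let $\underline k$ and $\overline k$ be the minimum and maximum of $p_a$ over $p\in P(M)$. Then \[ Q'_M(x,y)=(x-1)\,Q'_{M\setminus a}(x,y)+(y-1)\,Q'_{M/a}(x,y)+\sum_{k=\underline k}^{\overline k}Q'_{N_k}(x,y), \] where the sum ranges over all $a$-slices $N_k$, $\underline k\le k\le\overline k$ (including the deletion slice $k=\underline k$ and contraction slice $k=\overline k$, each counted once; if $\underline k=\overline k$ there is a single slice).
   Context: A polymatroid $M=(E,r)$ is a function $r:2^E\to\mathbb Z_{\ge0}$ with $r(\emptyset)=0$, $r$ monotone, and $r(X\cup Y)+r(X\cap Y)\le r(X)+r(Y)$. Its bases are the $\mathbf x\in\mathbb Z^E$ with $\sum_{i\in E}x_i=r(E)$ and $\sum_{i\in S}x_i\le r(S)$ for all $S$; $P(M)$ is their convex hull. For an integer $k$ with $\underline k\le k\le\overline k$, the $a$-slice $N_k$ is the polymatroid on $E\setminus\{a\}$ whose base polytope is the image, under the coordinate projection $\mathbb R^E\to\mathbb R^{E\setminus\{a\}}$, of the convex hull of the bases $p$ of $M$ with $p_a=k$. The deletion $M\setminus a$ is the slice $N_{\underline k}$ and the contraction $M/a$ is the slice $N_{\overline k}$. For a polymatroid $N$ on nonempty $F$ with base polytope $P(N)$, let $\Delta_F=\operatorname{conv}\{\mathbf e_i:i\in F\}$, $\nabla_F=-\Delta_F$, $Q_N(t,u)=\#((P(N)+u\Delta_F+t\nabla_F)\cap\mathbb Z^F)$ for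 integers $t,u\ge0$; this is a polynomial, written $Q_N(t,u)=\sum_{i,j}c_{ij}\binom{u}{j}\binom{t}{i}$, and $Q'_N(x,y)=\sum_{i,j}c_{ij}(x-1)^i(y-1)^j$. *)

theory Defs
  imports "HOL-Analysis.Analysis"
begin

text \<open>Ground sets are subsets E of a finite type 'a; the space R^E is modelled
  inside real^'a by the vectors vanishing outside E.\<close>

definition polymatroid :: "'a set \<Rightarrow> ('a set \<Rightarrow> int) \<Rightarrow> bool" where
  "polymatroid E r \<longleftrightarrow> finite E \<and> r {} = 0 \<and> (\<forall>X. X \<subseteq> E \<longrightarrow> 0 \<le> r X)
     \<and> (\<forall>X Y. X \<subseteq> Y \<and> Y \<subseteq> E \<longrightarrow> r X \<le> r Y)
     \<and> (\<forall>X Y. X \<subseteq> E \<and> Y \<subseteq> E \<longrightarrow> r (X \<union> Y) + r (X \<inter> Y) \<le> r X + r Y)"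

definition pm_bases :: "'a set \<Rightarrow> ('a set \<Rightarrow> int) \<Rightarrow> ('a \<Rightarrow> int) set" where
  "pm_bases E r = {x. (\<forall>i. i \<notin> E \<longrightarrow> x i = 0) \<and> (\<Sum>i\<in>E. x i) = r E
                      \<and> (\<forall>S. S \<subseteq> E \<longrightarrow> (\<Sum>i\<in>S. x i) \<le> r S)}"

definition int_vec :: "('a::finite \<Rightarrow> int) \<Rightarrow> real ^ 'a" where
  "int_vec x = (\<chi> i. real_of_int (x i))"

definition base_polytope :: "'a::finite set \<Rightarrow> ('a set \<Rightarrow> int) \<Rightarrow> (real ^ 'a) set" where
  "base_polytope E r = convex hull (int_vec ` pm_bases E r)"

definition proj_away :: "'a::finite \<Rightarrow> real ^ 'a \<Rightarrow> real ^ 'a" where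
  "proj_away a p = (\<chi> i. if i = a then 0 else p $ i)"

definition slice_polytope :: "'a::finite set \<Rightarrow> ('a set \<Rightarrow> int) \<Rightarrow> 'a \<Rightarrow> int \<Rightarrow> (real ^ 'a) set" where
  "slice_polytope E r a k =
     proj_away a ` (convex hull (int_vec ` {x \<in> pm_bases E r. x a = k}))"

text \<open>Standard simplex Delta_F = conv{e_i : i in F}; nabla_F = - Delta_F.\<close>
definition std_simplex :: "'a::finite set \<Rightarrow> (real ^ 'a) set" where
  "std_simplex F = convex hull ((\<lambda>i. axis i 1) ` F)"

definition Q_count :: "'a::finite set \<Rightarrow> (real ^ 'a) set \<Rightarrow> nat \<Rightarrow> nat \<Rightarrow> nat" where
  "Q_count F P t u = card {z :: real ^ 'a. (\<forall>i. i \<notin> F \<longrightarrow> z $ i = 0) \<and> (\<forall>i\<in>F. z $ i \<in> \<int>)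
      \<and> (\<exists>p d e. p \<in> P \<and> d \<in> std_simplex F \<and> e \<in> std_simplex F
               \<and> z = p + real u *\<^sub>R d + real t *\<^sub>R (- e))}"

definition Q_coeffs :: "'a::finite set \<Rightarrow> (real ^ 'a) set \<Rightarrow> nat \<Rightarrow> nat \<Rightarrow> real" where
  "Q_coeffs F P = (THE c. finite {(i, j). c i j \<noteq> 0} \<and>
      (\<forall>t u. real (Q_count F P t u) =
         (\<Sum>(i, j)\<in>{(i, j). c i j \<noteq> 0}. c i j * real (u choose j) * real (t choose i))))"

definition Q_prime :: "'a::finite set \<Rightarrow> (real ^ 'a) set \<Rightarrow> real \<Rightarrow> real \<Rightarrow> real" where
  "Q_prime F P x y = (\<Sum>(i, j)\<in>{(i, j). Q_coeffs F P i j \<noteq> 0}.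
       Q_coeffs F P i j * (x - 1) ^ i * (y - 1) ^ j)"

end

theory Submission
  imports Defs
begin

text \<open>The lattice points of \<open>P(M) + u \<Delta>\<^sub>E + t \<nabla>\<^sub>E\<close> are exactly the bases of the polymatroid
  with rank \<open>r S + u [S \<noteq> {}] - t [S = E]\<close>: a base of it is peeled down to a base of \<open>M\<close> one unit
  vector at a time, because the sets that are tight for it are closed under intersection (resp.
  union). Sort these bases by their \<open>a\<close>-coordinate \<open>m\<close>. It ranges over \<open>[k_min - t, k_max + u]\<close>,
  where \<open>k_min = r E - r (E - {a})\<close> and \<open>k_max = r {a}\<close> are the extreme values of \<open>p\<^sub>a\<close> on \<open>P(M)\<close>,
  and the fibre at \<open>m\<close> is in bijection with the bases for the slice \<open>N\<^sub>m\<close> when \<open>k_min \<le> m \<le> k_max\<close>,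
  for the contraction with \<open>u\<close> lowered by \<open>m - k_max\<close> above, and for the deletion with \<open>t\<close>
  lowered by \<open>k_min - m\<close> below. Hence
  \<open>Q_M(t, u) = (\<Sum>s<t. Q_{M\a}(s, u)) + (\<Sum>s<u. Q_{M/a}(t, s)) + (\<Sum>k. Q_{N_k}(t, u))\<close>.
  By induction on \<open>|E|\<close> every \<open>Q\<close> has a finite expansion in the basis \<open>(u choose j) (t choose i)\<close>;
  summing over \<open>s < t\<close> shifts \<open>i\<close> by one, which becomes the factor \<open>x - 1\<close> in \<open>Q'\<close>, and likewise
  summing over \<open>s < u\<close> gives the factor \<open>y - 1\<close>.\<close>

section \<open>Coordinate sums over convex hulls\<close>

lemma convex_coordinate_sum_vimage:
  fixes C :: "real set"
  assumes "convex C"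
  shows "convex {x :: real ^ 'n. (\<Sum>i\<in>S. x $ i) \<in> C}"
proof -
  have "linear (\<lambda>x :: real ^ 'n. \<Sum>i\<in>S. x $ i)"
    by (rule linearI) (simp_all add: sum.distrib sum_distrib_left)
  from convex_linear_vimage[OF this assms] show ?thesis
    by (simp add: vimage_def)
qed

lemma coordinate_sum_in_convex_hull:
  fixes C :: "real set"
  assumes "p \<in> convex hull A" and "convex C" and "\<And>x. x \<in> A \<Longrightarrow> (\<Sum>i\<in>S. x $ i) \<in> C"
  shows "(\<Sum>i\<in>S. p $ i) \<in> C"
  using hull_minimal[of A "{x. (\<Sum>i\<in>S. x $ i) \<in> C}" convex]
    convex_coordinate_sum_vimage[OF assms(2)] assms(1,3)
  by blast

lemma sum_int_vec: "(\<Sum>i\<in>S. int_vec b $ i) = real_of_int (sum b S)"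
  unfolding int_vec_def by simp

lemma inj_int_vec: "inj int_vec"
  unfolding inj_def int_vec_def by (auto simp: vec_eq_iff fun_eq_iff)

lemma base_polytope_sum_le:
  assumes "p \<in> base_polytope E r" and "S \<subseteq> E"
  shows "(\<Sum>i\<in>S. p $ i) \<le> r S"
proof -
  have "(\<Sum>i\<in>S. p $ i) \<in> {..real_of_int (r S)}"
    using assms(1) unfolding base_polytope_def
    by (rule coordinate_sum_in_convex_hull)
      (use assms(2) in \<open>auto simp: pm_bases_def sum_int_vec simp del: of_int_sum\<close>)
  then show ?thesis by simp
qed

lemma base_polytope_sum_eq:
  assumes "p \<in> base_polytope E r"
  shows "(\<Sum>i\<in>E. p $ i) = r E"
proof -
  have "(\<Sum>i\<in>E. p $ i) \<in> {real_of_int (r E)}"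
    using assms unfolding base_polytope_def
    by (rule coordinate_sum_in_convex_hull) (auto simp: pm_bases_def sum_int_vec simp del: of_int_sum)
  then show ?thesis by simp
qed

lemma int_vec_in_base_polytope: "b \<in> pm_bases E r \<Longrightarrow> int_vec b \<in> base_polytope E r"
  unfolding base_polytope_def by (auto intro: hull_inc)

lemma sum_axis_one: "(\<Sum>j\<in>S. axis i (1::real) $ j) = of_bool (i \<in> S)"
  unfolding axis_def by (simp add: sum.delta')

lemma std_simplex_sum_bounds:
  assumes "d \<in> std_simplex E"
  shows "0 \<le> (\<Sum>i\<in>S. d $ i)" and "(\<Sum>i\<in>S. d $ i) \<le> 1"
proof -
  have "(\<Sum>i\<in>S. d $ i) \<in> {0..1}"
    using assms unfolding std_simplex_def
    by (rule coordinate_sum_in_convex_hull) (auto simp: sum_axis_one)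
  then show "0 \<le> (\<Sum>i\<in>S. d $ i)" and "(\<Sum>i\<in>S. d $ i) \<le> 1" by auto
qed

lemma std_simplex_sum_eq:
  assumes "d \<in> std_simplex E"
  shows "(\<Sum>i\<in>E. d $ i) = 1"
proof -
  have "(\<Sum>i\<in>E. d $ i) \<in> {1}"
    using assms unfolding std_simplex_def
    by (rule coordinate_sum_in_convex_hull) (auto simp: sum_axis_one)
  then show ?thesis by simp
qed

lemma axis_in_std_simplex: "i \<in> E \<Longrightarrow> axis i 1 \<in> std_simplex E"
  unfolding std_simplex_def by (auto intro: hull_inc)

lemma std_simplex_scaled_add_axis:
  assumes "d \<in> std_simplex E" and "i \<in> E"
  shows "\<exists>d'\<in>std_simplex E. real (Suc n) *\<^sub>R d' = real n *\<^sub>R d + axis i 1"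
proof
  define d' where "d' = (real n / real (Suc n)) *\<^sub>R d + (1 / real (Suc n)) *\<^sub>R axis i 1"
  show "d' \<in> std_simplex E"
    unfolding d'_def
    using assms axis_in_std_simplex[OF assms(2)] unfolding std_simplex_def
    by (intro convexD[OF convex_convex_hull]) (auto simp: field_simps)
  show "real (Suc n) *\<^sub>R d' = real n *\<^sub>R d + axis i 1"
    unfolding d'_def by (simp add: scaleR_add_right del: of_nat_Suc)
qed

section \<open>Raising and lowering bases\<close>

lemma pm_basesI:
  assumes "\<And>i. i \<notin> E \<Longrightarrow> z i = 0" and "sum z E = f E" and "\<And>S. S \<subseteq> E \<Longrightarrow> sum z S \<le> f S"
  shows "z \<in> pm_bases E f"
  using assms unfolding pm_bases_def by auto

lemma pm_basesD:
  assumes "z \<in> pm_bases E f"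
  shows "i \<notin> E \<Longrightarrow> z i = 0" and "sum z E = f E" and "S \<subseteq> E \<Longrightarrow> sum z S \<le> f S"
  using assms unfolding pm_bases_def by auto

definition submodular_on :: "'a set \<Rightarrow> ('a set \<Rightarrow> int) \<Rightarrow> bool" where
  "submodular_on E f \<longleftrightarrow>
     (\<forall>X Y. X \<subseteq> E \<and> Y \<subseteq> E \<longrightarrow> f (X \<union> Y) + f (X \<inter> Y) \<le> f X + f Y)"

lemma submodular_onD:
  "submodular_on E f \<Longrightarrow> X \<subseteq> E \<Longrightarrow> Y \<subseteq> E \<Longrightarrow> f (X \<union> Y) + f (X \<inter> Y) \<le> f X + f Y"
  unfolding submodular_on_def by blast

lemma polymatroid_submodular_on: "polymatroid E r \<Longrightarrow> submodular_on E r"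
  unfolding polymatroid_def submodular_on_def by blast

lemma sum_minus_unit:
  "finite S \<Longrightarrow> (\<Sum>j\<in>S. z j - of_bool (j = i)) = sum z S - (of_bool (i \<in> S) :: int)"
  by (simp add: sum_subtractf)

lemma sum_plus_unit:
  "finite S \<Longrightarrow> (\<Sum>j\<in>S. z j + of_bool (j = i)) = sum z S + (of_bool (i \<in> S) :: int)"
  by (simp add: sum.distrib)

lemma int_vec_minus_unit: "int_vec (\<lambda>j. z j - of_bool (j = i)) = int_vec z - axis i 1"
  unfolding int_vec_def by (auto simp: vec_eq_iff axis_def)

lemma int_vec_plus_unit: "int_vec (\<lambda>j. z j + of_bool (j = i)) = int_vec z + axis i 1"
  unfolding int_vec_def by (auto simp: vec_eq_iff axis_def)

text \<open>The sets that are tight for \<open>z\<close> are closed under intersection by submodularity; lowering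
  \<open>z\<close> at a point of the least tight set keeps every constraint.\<close>
lemma exists_decrement_in_pm_bases:
  assumes fin: "finite E" and "E \<noteq> {}" and sm: "submodular_on E f" and f0: "f {} = 0"
    and z: "z \<in> pm_bases E (\<lambda>S. f S + of_bool (S \<noteq> {}))"
  shows "\<exists>i\<in>E. (\<lambda>j. z j - of_bool (j = i)) \<in> pm_bases E f"
proof -
  define F where "F S = f S + of_bool (S \<noteq> {})" for S
  have zle: "sum z S \<le> F S" if "S \<subseteq> E" for S
    using pm_basesD(3)[OF z that] unfolding F_def .
  define T where "T = {X. X \<subseteq> E \<and> X \<noteq> {} \<and> sum z X = F X}"
  have "E \<in> T"
    using pm_basesD(2)[OF z] \<open>E \<noteq> {}\<close> unfolding T_def F_def by auto
  have inter_T: "X \<inter> Y \<in> T" if "X \<in> T" "Y \<in> T" for X Y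
  proof -
    have X: "X \<subseteq> E" "X \<noteq> {}" "sum z X = f X + 1" and Y: "Y \<subseteq> E" "Y \<noteq> {}" "sum z Y = f Y + 1"
      using that unfolding T_def F_def by auto
    have modular: "sum z (X \<union> Y) + sum z (X \<inter> Y) = sum z X + sum z Y"
      using X(1) Y(1) fin by (intro sum.union_inter) (auto intro: finite_subset)
    have sub: "f (X \<union> Y) + f (X \<inter> Y) \<le> f X + f Y"
      using submodular_onD[OF sm X(1) Y(1)] .
    have union_le: "sum z (X \<union> Y) \<le> f (X \<union> Y) + 1"
      using zle[of "X \<union> Y"] X(1,2) Y(1) by (simp add: F_def)
    have "X \<inter> Y \<noteq> {}"
    proof
      assume "X \<inter> Y = {}"
      then show False using modular sub union_le X(3) Y(3) f0 by simp
    qed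
    moreover have "sum z (X \<inter> Y) \<le> f (X \<inter> Y) + 1"
      using zle[of "X \<inter> Y"] X(1) calculation by (auto simp: F_def)
    ultimately show ?thesis
      using modular sub union_le X Y unfolding T_def F_def by auto
  qed
  have "\<Inter>T \<in> T"
    by (rule finite_Inf_in) (use fin \<open>E \<in> T\<close> inter_T in \<open>auto simp: T_def\<close>)
  then obtain i where i: "i \<in> \<Inter>T" and "i \<in> E"
    unfolding T_def by auto
  have "(\<lambda>j. z j - of_bool (j = i)) \<in> pm_bases E f"
  proof (rule pm_basesI)
    show "z j - of_bool (j = i) = 0" if "j \<notin> E" for j
      using pm_basesD(1)[OF z that] that \<open>i \<in> E\<close> by auto
    show "(\<Sum>j\<in>E. z j - of_bool (j = i)) = f E"
      using pm_basesD(2)[OF z] \<open>i \<in> E\<close> \<open>E \<noteq> {}\<close> fin by (simp add: sum_minus_unit)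
    show "(\<Sum>j\<in>S. z j - of_bool (j = i)) \<le> f S" if S: "S \<subseteq> E" for S
    proof -
      have "finite S" using S fin by (rule finite_subset)
      consider "S = {}" | "S \<in> T" | "S \<noteq> {}" "S \<notin> T" by blast
      then show ?thesis
      proof cases
        case 1
        then show ?thesis using f0 by simp
      next
        case 2
        then have "i \<in> S" "sum z S = f S + 1" using i by (auto simp: T_def F_def)
        then show ?thesis using \<open>finite S\<close> by (simp add: sum_minus_unit)
      next
        case 3
        then have "sum z S \<le> f S" using zle[OF S] S by (auto simp: T_def F_def)
        then show ?thesis using \<open>finite S\<close> by (simp add: sum_minus_unit)
      qed
    qed
  qed
  then show ?thesis using \<open>i \<in> E\<close> by blast
qed

text \<open>Dually, the tight proper subsets are closed under union; raising \<open>z\<close> outside the largest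
  one keeps every constraint.\<close>
lemma exists_increment_in_pm_bases:
  assumes fin: "finite E" and "E \<noteq> {}" and sm: "submodular_on E f" and f0: "f {} = 0"
    and z: "z \<in> pm_bases E (\<lambda>S. f S - of_bool (S = E))"
  shows "\<exists>i\<in>E. (\<lambda>j. z j + of_bool (j = i)) \<in> pm_bases E f"
proof -
  define G where "G S = f S - of_bool (S = E)" for S
  have zle: "sum z S \<le> G S" if "S \<subseteq> E" for S
    using pm_basesD(3)[OF z that] unfolding G_def .
  define T where "T = {X. X \<subseteq> E \<and> X \<noteq> E \<and> sum z X = f X}"
  have "{} \<in> T"
    using \<open>E \<noteq> {}\<close> f0 unfolding T_def by auto
  have union_T: "X \<union> Y \<in> T" if "X \<in> T" "Y \<in> T" for X Y
  proof -
    have X: "X \<subseteq> E" "X \<noteq> E" "sum z X = f X" and Y: "Y \<subseteq> E" "Y \<noteq> E" "sum z Y = f Y"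
      using that unfolding T_def by auto
    have modular: "sum z (X \<union> Y) + sum z (X \<inter> Y) = sum z X + sum z Y"
      using X(1) Y(1) fin by (intro sum.union_inter) (auto intro: finite_subset)
    have sub: "f (X \<union> Y) + f (X \<inter> Y) \<le> f X + f Y"
      using submodular_onD[OF sm X(1) Y(1)] .
    have "X \<inter> Y \<subseteq> E" "X \<inter> Y \<noteq> E" using X(1,2) by blast+
    then have inter_le: "sum z (X \<inter> Y) \<le> f (X \<inter> Y)"
      using zle[of "X \<inter> Y"] by (simp add: G_def)
    have "X \<union> Y \<noteq> E"
    proof
      assume "X \<union> Y = E"
      then show False using modular sub inter_le X(3) Y(3) zle[of E] by (simp add: G_def)
    qed
    moreover have "sum z (X \<union> Y) \<le> f (X \<union> Y)"
      using zle[of "X \<union> Y"] X(1) Y(1) calculation by (simp add: G_def)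
    ultimately show ?thesis
      using modular sub inter_le X Y unfolding T_def by auto
  qed
  have "\<Union>T \<in> T"
    by (rule finite_Sup_in) (use fin \<open>{} \<in> T\<close> union_T in \<open>auto simp: T_def\<close>)
  then have "\<Union>T \<subset> E"
    unfolding T_def by blast
  then obtain i where "i \<in> E" and i: "i \<notin> \<Union>T"
    using psubset_imp_ex_mem by blast
  have "(\<lambda>j. z j + of_bool (j = i)) \<in> pm_bases E f"
  proof (rule pm_basesI)
    show "z j + of_bool (j = i) = 0" if "j \<notin> E" for j
      using pm_basesD(1)[OF z that] that \<open>i \<in> E\<close> by auto
    show "(\<Sum>j\<in>E. z j + of_bool (j = i)) = f E"
      using pm_basesD(2)[OF z] \<open>i \<in> E\<close> fin by (simp add: sum_plus_unit)
    show "(\<Sum>j\<in>S. z j + of_bool (j = i)) \<le> f S" if S: "S \<subseteq> E" for S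
    proof -
      have "finite S" using S fin by (rule finite_subset)
      consider "S = E" | "S \<noteq> E" "i \<in> S" | "i \<notin> S" by blast
      then show ?thesis
      proof cases
        case 1
        then show ?thesis using pm_basesD(2)[OF z] \<open>i \<in> E\<close> fin by (simp add: sum_plus_unit)
      next
        case 2
        then have "S \<notin> T" using i by blast
        then have "sum z S \<noteq> f S" "sum z S \<le> f S"
          using 2 zle[OF S] S by (auto simp: T_def G_def)
        then show ?thesis using 2 \<open>finite S\<close> by (simp add: sum_plus_unit)
      next
        case 3
        then have "S \<noteq> E" using \<open>i \<in> E\<close> by blast
        then show ?thesis using 3 zle[OF S] \<open>finite S\<close> by (simp add: sum_plus_unit G_def)
      qed
    qed
  qed
  then show ?thesis using \<open>i \<in> E\<close> by blast
qed

section \<open>Lattice points of the dilated base polytope\<close>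

text \<open>The rank function of the polytope \<open>P(M) + u \<Delta>\<^sub>E + t \<nabla>\<^sub>E\<close>.\<close>
definition minkowski_rank :: "'a set \<Rightarrow> ('a set \<Rightarrow> int) \<Rightarrow> nat \<Rightarrow> nat \<Rightarrow> 'a set \<Rightarrow> int" where
  "minkowski_rank E r t u S = r S + (if S = {} then 0 else int u) - (if S = E then int t else 0)"

lemma minkowski_rank_0_0 [simp]: "minkowski_rank E r 0 0 = r"
  unfolding minkowski_rank_def by auto

lemma minkowski_rank_Suc_u:
  "minkowski_rank E r t (Suc u) = (\<lambda>S. minkowski_rank E r t u S + of_bool (S \<noteq> {}))"
  unfolding minkowski_rank_def by auto

lemma minkowski_rank_Suc_t:
  "minkowski_rank E r (Suc t) u = (\<lambda>S. minkowski_rank E r t u S - of_bool (S = E))"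
  unfolding minkowski_rank_def by auto

lemma minkowski_rank_empty: "E \<noteq> {} \<Longrightarrow> minkowski_rank E r t u {} = r {}"
  unfolding minkowski_rank_def by auto

lemma submodular_on_minkowski_rank:
  assumes "submodular_on E r"
  shows "submodular_on E (minkowski_rank E r t u)"
  unfolding submodular_on_def
proof (intro allI impI)
  fix X Y assume XY: "X \<subseteq> E \<and> Y \<subseteq> E"
  have "r (X \<union> Y) + r (X \<inter> Y) \<le> r X + r Y"
    using assms XY by (blast dest: submodular_onD)
  moreover have "(if X \<union> Y = {} then 0 else int u) + (if X \<inter> Y = {} then 0 else int u)
      \<le> (if X = {} then 0 else int u) + (if Y = {} then 0 else int u)"
    by auto
  moreover have "(if X = E then int t else 0) + (if Y = E then int t else 0)
      \<le> (if X \<union> Y = E then int t else 0) + (if X \<inter> Y = E then int t else 0)"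
    using XY by auto
  ultimately show "minkowski_rank E r t u (X \<union> Y) + minkowski_rank E r t u (X \<inter> Y)
      \<le> minkowski_rank E r t u X + minkowski_rank E r t u Y"
    unfolding minkowski_rank_def by linarith
qed

lemma minkowski_rank_bases_decompose:
  assumes pm: "polymatroid E r" and "E \<noteq> {}" and "z \<in> pm_bases E (minkowski_rank E r t u)"
  shows "\<exists>b\<in>pm_bases E r. \<exists>d\<in>std_simplex E. \<exists>e\<in>std_simplex E.
           int_vec z = int_vec b + real u *\<^sub>R d - real t *\<^sub>R e"
  using assms(3)
proof (induction "t + u" arbitrary: t u z rule: less_induct)
  case less
  have fin: "finite E" and r0: "r {} = 0" using pm unfolding polymatroid_def by auto
  have sm: "submodular_on E (minkowski_rank E r t' u')" for t' u'
    by (rule submodular_on_minkowski_rank[OF polymatroid_submodular_on[OF pm]])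
  have empty: "minkowski_rank E r t' u' {} = 0" for t' u'
    using minkowski_rank_empty[OF \<open>E \<noteq> {}\<close>] r0 by simp
  consider "t = 0" "u = 0" | u' where "u = Suc u'" | t' where "t = Suc t'"
    using not0_implies_Suc by blast
  then show ?case
  proof cases
    case 1
    obtain i where "i \<in> E" using \<open>E \<noteq> {}\<close> by blast
    have "z \<in> pm_bases E r" using 1 less.prems by simp
    moreover have "int_vec z = int_vec z + real u *\<^sub>R axis i 1 - real t *\<^sub>R axis i 1" using 1 by simp
    ultimately show ?thesis using axis_in_std_simplex[OF \<open>i \<in> E\<close>] by blast
  next
    case (2 u')
    have "z \<in> pm_bases E (\<lambda>S. minkowski_rank E r t u' S + of_bool (S \<noteq> {}))"
      using less.prems 2 by (simp add: minkowski_rank_Suc_u)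
    then obtain i where "i \<in> E" and i: "(\<lambda>j. z j - of_bool (j = i)) \<in> pm_bases E (minkowski_rank E r t u')"
      using exists_decrement_in_pm_bases[OF fin \<open>E \<noteq> {}\<close> sm empty] by blast
    obtain b d e where "b \<in> pm_bases E r" "d \<in> std_simplex E" "e \<in> std_simplex E"
      and z: "int_vec z - axis i 1 = int_vec b + real u' *\<^sub>R d - real t *\<^sub>R e"
      using less.hyps[OF _ i] 2 by (auto simp: int_vec_minus_unit)
    moreover obtain d' where "d' \<in> std_simplex E" and d': "real u *\<^sub>R d' = real u' *\<^sub>R d + axis i 1"
      using std_simplex_scaled_add_axis[OF \<open>d \<in> std_simplex E\<close> \<open>i \<in> E\<close>] 2 by blast
    moreover have "int_vec z = int_vec b + real u *\<^sub>R d' - real t *\<^sub>R e"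
      using z d' by (simp add: algebra_simps)
    ultimately show ?thesis by blast
  next
    case (3 t')
    have "z \<in> pm_bases E (\<lambda>S. minkowski_rank E r t' u S - of_bool (S = E))"
      using less.prems 3 by (simp add: minkowski_rank_Suc_t)
    then obtain i where "i \<in> E" and i: "(\<lambda>j. z j + of_bool (j = i)) \<in> pm_bases E (minkowski_rank E r t' u)"
      using exists_increment_in_pm_bases[OF fin \<open>E \<noteq> {}\<close> sm empty] by blast
    obtain b d e where "b \<in> pm_bases E r" "d \<in> std_simplex E" "e \<in> std_simplex E"
      and z: "int_vec z + axis i 1 = int_vec b + real u *\<^sub>R d - real t' *\<^sub>R e"
      using less.hyps[OF _ i] 3 by (auto simp: int_vec_plus_unit)
    moreover obtain e' where "e' \<in> std_simplex E" and e': "real t *\<^sub>R e' = real t' *\<^sub>R e + axis i 1"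
      using std_simplex_scaled_add_axis[OF \<open>e \<in> std_simplex E\<close> \<open>i \<in> E\<close>] 3 by blast
    moreover have "int_vec z = int_vec b + real u *\<^sub>R d - real t *\<^sub>R e'"
      using z e' by (simp add: algebra_simps)
    ultimately show ?thesis by blast
  qed
qed

lemma pm_bases_minkowski_rankI:
  assumes pm: "polymatroid E r" and "E \<noteq> {}"
    and p: "p \<in> base_polytope E r" and d: "d \<in> std_simplex E" and e: "e \<in> std_simplex E"
    and w: "int_vec w = p + real u *\<^sub>R d - real t *\<^sub>R e" and outside: "\<And>i. i \<notin> E \<Longrightarrow> w i = 0"
  shows "w \<in> pm_bases E (minkowski_rank E r t u)"
proof (rule pm_basesI)
  have sum_w: "real_of_int (sum w S)
      = (\<Sum>i\<in>S. p $ i) + real u * (\<Sum>i\<in>S. d $ i) - real t * (\<Sum>i\<in>S. e $ i)" for S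
    using sum_int_vec[of w S] unfolding w
    by (simp add: sum.distrib sum_subtractf sum_distrib_left)
  show "w i = 0" if "i \<notin> E" for i
    using outside that .
  have "real_of_int (sum w E) = real_of_int (minkowski_rank E r t u E)"
    using sum_w[of E] base_polytope_sum_eq[OF p] std_simplex_sum_eq[OF d] std_simplex_sum_eq[OF e]
      \<open>E \<noteq> {}\<close> by (simp add: minkowski_rank_def)
  then show sum_E: "sum w E = minkowski_rank E r t u E" by linarith
  show "sum w S \<le> minkowski_rank E r t u S" if S: "S \<subseteq> E" for S
  proof -
    consider "S = {}" | "S = E" | "S \<noteq> {}" "S \<noteq> E" by blast
    then show ?thesis
    proof cases
      case 1
      then show ?thesis using pm \<open>E \<noteq> {}\<close> by (simp add: minkowski_rank_def polymatroid_def)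
    next
      case 2
      then show ?thesis using sum_E by simp
    next
      case 3
      have "real u * (\<Sum>i\<in>S. d $ i) \<le> real u" "0 \<le> real t * (\<Sum>i\<in>S. e $ i)"
        using std_simplex_sum_bounds[OF d, of S] std_simplex_sum_bounds[OF e, of S]
        by (simp_all add: mult_left_le)
      then have "real_of_int (sum w S) \<le> real_of_int (r S + int u)"
        using sum_w[of S] base_polytope_sum_le[OF p S] by simp
      then have "sum w S \<le> r S + int u" by linarith
      then show ?thesis using 3 by (simp add: minkowski_rank_def)
    qed
  qed
qed

lemma lattice_points_minkowski_sum:
  assumes pm: "polymatroid E r" and "E \<noteq> {}"
  shows "{z :: real ^ 'a. (\<forall>i. i \<notin> E \<longrightarrow> z $ i = 0) \<and> (\<forall>i\<in>E. z $ i \<in> \<int>)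
      \<and> (\<exists>p d e. p \<in> base_polytope E r \<and> d \<in> std_simplex E \<and> e \<in> std_simplex E
               \<and> z = p + real u *\<^sub>R d + real t *\<^sub>R (- e))}
    = int_vec ` pm_bases E (minkowski_rank E r t u)"
    (is "?L = ?R")
proof
  show "?L \<subseteq> ?R"
  proof
    fix z assume "z \<in> ?L"
    then obtain p d e where z0: "\<forall>i. i \<notin> E \<longrightarrow> z $ i = 0" "\<forall>i\<in>E. z $ i \<in> \<int>"
      and p: "p \<in> base_polytope E r" and d: "d \<in> std_simplex E" and e: "e \<in> std_simplex E"
      and z: "z = p + real u *\<^sub>R d - real t *\<^sub>R e"
      by auto
    define w where "w i = \<lfloor>z $ i\<rfloor>" for i
    have zw: "int_vec w = z"
      unfolding int_vec_def w_def vec_eq_iff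
    proof
      fix i show "(\<chi> i. real_of_int \<lfloor>z $ i\<rfloor>) $ i = z $ i"
        using z0 by (cases "i \<in> E") (auto elim!: Ints_cases)
    qed
    have "w \<in> pm_bases E (minkowski_rank E r t u)"
      using pm_bases_minkowski_rankI[OF pm \<open>E \<noteq> {}\<close> p d e] zw z z0(1) by (simp add: w_def)
    then show "z \<in> ?R" using zw by auto
  qed
next
  show "?R \<subseteq> ?L"
  proof
    fix z assume "z \<in> ?R"
    then obtain w where w: "w \<in> pm_bases E (minkowski_rank E r t u)" and z: "z = int_vec w"
      by auto
    obtain b d e where "b \<in> pm_bases E r" "d \<in> std_simplex E" "e \<in> std_simplex E"
      and "int_vec w = int_vec b + real u *\<^sub>R d - real t *\<^sub>R e"
      using minkowski_rank_bases_decompose[OF pm \<open>E \<noteq> {}\<close> w] by blast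
    moreover from this have "z = int_vec b + real u *\<^sub>R d + real t *\<^sub>R (- e)"
      using z by simp
    moreover have "\<forall>i. i \<notin> E \<longrightarrow> z $ i = 0" "\<forall>i\<in>E. z $ i \<in> \<int>"
      using pm_basesD(1)[OF w] unfolding z int_vec_def by auto
    ultimately show "z \<in> ?L"
      using int_vec_in_base_polytope by blast
  qed
qed

lemma Q_count_base_polytope:
  assumes "polymatroid E r" and "E \<noteq> {}"
  shows "Q_count E (base_polytope E r) t u = card (pm_bases E (minkowski_rank E r t u))"
  unfolding Q_count_def lattice_points_minkowski_sum[OF assms]
  by (rule card_image[OF inj_on_subset[OF inj_int_vec subset_UNIV]])

section \<open>Fibres over a coordinate\<close>

text \<open>Sufficient conditions for \<open>G\<close> to be a rank function on \<open>E - {a}\<close> for the bases of \<open>F\<close> with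
  \<open>a\<close>-coordinate \<open>m\<close>.\<close>
definition fibre_rank :: "'a set \<Rightarrow> 'a \<Rightarrow> ('a set \<Rightarrow> int) \<Rightarrow> int \<Rightarrow> ('a set \<Rightarrow> int) \<Rightarrow> bool" where
  "fibre_rank E a F m G \<longleftrightarrow>
     (\<forall>S. S \<subseteq> E - {a} \<longrightarrow> S \<noteq> {} \<longrightarrow> S \<noteq> E - {a} \<longrightarrow> G S = min (F S) (F (insert a S) - m))
     \<and> 0 \<le> F {} \<and> G {} = 0 \<and> m \<le> F {a} \<and> G (E - {a}) = F E - m \<and> F E - m \<le> F (E - {a})"

lemma fibre_rankD:
  assumes "fibre_rank E a F m G"
  shows "S \<subseteq> E - {a} \<Longrightarrow> S \<noteq> {} \<Longrightarrow> S \<noteq> E - {a} \<Longrightarrow> G S = min (F S) (F (insert a S) - m)"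
    and "0 \<le> F {}" and "G {} = 0" and "m \<le> F {a}"
    and "G (E - {a}) = F E - m" and "F E - m \<le> F (E - {a})"
  using assms unfolding fibre_rank_def by blast+

lemma sum_insert_fun_upd:
  assumes "finite S" "a \<notin> S"
  shows "sum (y(a := c)) (insert a S) = c + sum y S"
proof -
  have "sum (y(a := c)) S = sum y S" using assms(2) by (intro sum.cong) auto
  then show ?thesis using assms by simp
qed

lemma pm_bases_fibre_restrict:
  assumes G: "fibre_rank E a F m G" and "finite E" "a \<in> E"
    and z: "z \<in> pm_bases E F" and "z a = m"
  shows "z(a := 0) \<in> pm_bases (E - {a}) G"
proof -
  have sum_z: "sum z (insert a S) = m + sum z S" if "S \<subseteq> E - {a}" for S
    using that \<open>finite E\<close> \<open>z a = m\<close> by (subst sum.insert) (auto intro: finite_subset)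
  have sum_y: "sum (z(a := 0)) S = sum z S" if "S \<subseteq> E - {a}" for S
    using that by (intro sum.cong) auto
  have E: "insert a (E - {a}) = E" using \<open>a \<in> E\<close> by blast
  have top: "sum z (E - {a}) = F E - m"
    using sum_z[of "E - {a}"] pm_basesD(2)[OF z] unfolding E by simp
  show ?thesis
  proof (rule pm_basesI)
    show "(z(a := 0)) i = 0" if "i \<notin> E - {a}" for i
      using that pm_basesD(1)[OF z] by auto
    show "sum (z(a := 0)) (E - {a}) = G (E - {a})"
      using sum_y[of "E - {a}"] top fibre_rankD(5)[OF G] by simp
    show "sum (z(a := 0)) S \<le> G S" if S: "S \<subseteq> E - {a}" for S
    proof -
      have "insert a S \<subseteq> E" "S \<subseteq> E" using S \<open>a \<in> E\<close> by blast+
      then have bounds: "sum z S \<le> F S" "m + sum z S \<le> F (insert a S)"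
        using pm_basesD(3)[OF z] sum_z[OF S] by metis+
      consider "S = {}" | "S = E - {a}" | "S \<noteq> {}" "S \<noteq> E - {a}" by blast
      then have "sum z S \<le> G S"
      proof cases
        case 1
        then show ?thesis using fibre_rankD(3)[OF G] by simp
      next
        case 2
        then show ?thesis using top fibre_rankD(5)[OF G] by simp
      qed (use bounds fibre_rankD(1)[OF G S] in simp)
      then show ?thesis using sum_y[OF S] by simp
    qed
  qed
qed

lemma pm_bases_fibre_extend:
  assumes G: "fibre_rank E a F m G" and "finite E" "a \<in> E"
    and y: "y \<in> pm_bases (E - {a}) G"
  shows "y(a := m) \<in> pm_bases E F"
proof -
  have sum_z: "sum (y(a := m)) (insert a S) = m + sum y S" if "S \<subseteq> E - {a}" for S
    using that \<open>finite E\<close> by (intro sum_insert_fun_upd) (auto intro: finite_subset)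
  have sum_y: "sum (y(a := m)) S = sum y S" if "S \<subseteq> E - {a}" for S
    using that by (intro sum.cong) auto
  have E: "insert a (E - {a}) = E" using \<open>a \<in> E\<close> by blast
  have top: "sum y (E - {a}) = F E - m"
    using pm_basesD(2)[OF y] fibre_rankD(5)[OF G] by simp
  have bound: "sum y S \<le> F S \<and> m + sum y S \<le> F (insert a S)" if S: "S \<subseteq> E - {a}" for S
  proof -
    consider "S = {}" | "S = E - {a}" | "S \<noteq> {}" "S \<noteq> E - {a}" by blast
    then show ?thesis
    proof cases
      case 1
      then show ?thesis using fibre_rankD(2,4)[OF G] by simp
    next
      case 2
      then show ?thesis using top fibre_rankD(6)[OF G] E by simp
    qed (use pm_basesD(3)[OF y S] fibre_rankD(1)[OF G S] in simp)
  qed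
  show ?thesis
  proof (rule pm_basesI)
    show "(y(a := m)) i = 0" if "i \<notin> E" for i
      using that pm_basesD(1)[OF y] \<open>a \<in> E\<close> by auto
    show "sum (y(a := m)) E = F E"
      using sum_z[of "E - {a}"] top unfolding E by simp
    show "sum (y(a := m)) S \<le> F S" if S: "S \<subseteq> E" for S
    proof (cases "a \<in> S")
      case True
      then have "S = insert a (S - {a})" "S - {a} \<subseteq> E - {a}" using S by auto
      then show ?thesis using sum_z bound by metis
    next
      case False
      then have "S \<subseteq> E - {a}" using S by auto
      then show ?thesis using sum_y bound by simp
    qed
  qed
qed

lemma bij_betw_fibre_pm_bases:
  assumes "fibre_rank E a F m G" and "finite E" "a \<in> E"
  shows "bij_betw (\<lambda>z. z(a := 0)) {z \<in> pm_bases E F. z a = m} (pm_bases (E - {a}) G)"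
proof (rule bij_betw_byWitness[where f' = "\<lambda>y. y(a := m)"])
  show "\<forall>z\<in>{z \<in> pm_bases E F. z a = m}. (z(a := 0))(a := m) = z"
    by auto
  show "\<forall>y\<in>pm_bases (E - {a}) G. (y(a := m))(a := 0) = y"
    using pm_basesD(1) by (fastforce simp: fun_eq_iff)
  show "(\<lambda>z. z(a := 0)) ` {z \<in> pm_bases E F. z a = m} \<subseteq> pm_bases (E - {a}) G"
    using pm_bases_fibre_restrict[OF assms] by blast
  show "(\<lambda>y. y(a := m)) ` pm_bases (E - {a}) G \<subseteq> {z \<in> pm_bases E F. z a = m}"
    using pm_bases_fibre_extend[OF assms] by auto
qed

lemma pm_bases_coordinate_bounds:
  assumes "finite E" "a \<in> E" and z: "z \<in> pm_bases E F"
  shows "z a \<le> F {a}" and "F E - F (E - {a}) \<le> z a"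
proof -
  show "z a \<le> F {a}" using pm_basesD(3)[OF z, of "{a}"] \<open>a \<in> E\<close> by simp
  have "sum z E = z a + sum z (E - {a})" using assms(1,2) by (rule sum.remove)
  then show "F E - F (E - {a}) \<le> z a" using pm_basesD(2)[OF z] pm_basesD(3)[OF z, of "E - {a}"] by auto
qed

lemma finite_pm_bases:
  fixes E :: "'a::finite set"
  shows "finite (pm_bases E f)"
proof -
  define B where "B i = (if i \<in> E then {f E - f (E - {i})..f {i}} else {0})" for i
  have "pm_bases E f \<subseteq> PiE UNIV B"
  proof
    fix z assume z: "z \<in> pm_bases E f"
    have "z i \<in> B i" for i
      using pm_bases_coordinate_bounds[OF finite _ z, of i] pm_basesD(1)[OF z, of i] by (auto simp: B_def)
    then show "z \<in> PiE UNIV B" by (simp add: PiE_UNIV_domain)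
  qed
  moreover have "finite (PiE UNIV B)" by (rule finite_PiE) (auto simp: B_def)
  ultimately show ?thesis by (rule finite_subset)
qed

lemma pm_bases_singleton:
  assumes "0 \<le> F {}"
  shows "pm_bases {e} F = {(\<lambda>j. if j = e then F {e} else 0)}"
  using assms unfolding pm_bases_def by (auto simp: fun_eq_iff subset_singleton_iff)

lemma sum_int_interval_below:
  "(\<Sum>m\<in>{c - int n..<c}. f m) = (\<Sum>s<n. f (c - int (n - s)))"
  by (rule sum.reindex_bij_witness[of _ "\<lambda>s. c - int (n - s)" "\<lambda>m. n - nat (c - m)"]) auto

lemma sum_int_interval_above:
  "(\<Sum>m\<in>{c<..c + int n}. f m) = (\<Sum>s<n. f (c + int (n - s)))"
  by (rule sum.reindex_bij_witness[of _ "\<lambda>s. c + int (n - s)" "\<lambda>m. n - nat (m - c)"]) auto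

lemma sum_int_interval_split:
  fixes c d :: int
  assumes "c \<le> d"
  shows "(\<Sum>m\<in>{c - int t..d + int u}. f m)
    = (\<Sum>m\<in>{c - int t..<c}. f m) + (\<Sum>m\<in>{c..d}. f m) + (\<Sum>m\<in>{d<..d + int u}. f m)"
proof -
  have "{c - int t..d + int u} = {c - int t..<c} \<union> {c..d} \<union> {d<..d + int u}"
    using assms by auto
  moreover have "({c - int t..<c} \<union> {c..d}) \<inter> {d<..d + int u} = {}" "{c - int t..<c} \<inter> {c..d} = {}"
    using assms by auto
  ultimately show ?thesis
    by (simp add: sum.union_disjoint del: Un_iff)
qed

section \<open>Binomial expansions\<close>

definition binomial_expansion :: "nat \<Rightarrow> (nat \<Rightarrow> nat \<Rightarrow> real) \<Rightarrow> (nat \<Rightarrow> nat \<Rightarrow> real) \<Rightarrow> bool" where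
  "binomial_expansion N c f \<longleftrightarrow> (\<forall>i j. c i j \<noteq> 0 \<longrightarrow> i < N \<and> j < N) \<and>
     (\<forall>t u. f t u = (\<Sum>i<N. \<Sum>j<N. c i j * real (u choose j) * real (t choose i)))"

definition shifted_eval :: "(nat \<Rightarrow> nat \<Rightarrow> real) \<Rightarrow> nat \<Rightarrow> real \<Rightarrow> real \<Rightarrow> real" where
  "shifted_eval c N x y = (\<Sum>i<N. \<Sum>j<N. c i j * (x - 1) ^ i * (y - 1) ^ j)"

lemma binomial_expansionI:
  "(\<And>i j. c i j \<noteq> 0 \<Longrightarrow> i < N \<and> j < N) \<Longrightarrow>
   (\<And>t u. f t u = (\<Sum>i<N. \<Sum>j<N. c i j * real (u choose j) * real (t choose i))) \<Longrightarrow>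
   binomial_expansion N c f"
  unfolding binomial_expansion_def by blast

lemma binomial_expansion_support:
  "binomial_expansion N c f \<Longrightarrow> c i j \<noteq> 0 \<Longrightarrow> i < N \<and> j < N"
  unfolding binomial_expansion_def by blast

lemma binomial_expansion_eq:
  "binomial_expansion N c f \<Longrightarrow> f t u = (\<Sum>i<N. \<Sum>j<N. c i j * real (u choose j) * real (t choose i))"
  unfolding binomial_expansion_def by blast

lemma sum_support_eq_box:
  fixes c g :: "nat \<Rightarrow> nat \<Rightarrow> real"
  assumes "\<And>i j. c i j \<noteq> 0 \<Longrightarrow> i < N \<and> j < N" and "\<And>i j. c i j = 0 \<Longrightarrow> g i j = 0"
  shows "(\<Sum>(i, j)\<in>{(i, j). c i j \<noteq> 0}. g i j) = (\<Sum>i<N. \<Sum>j<N. g i j)"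
proof -
  have "{(i, j). c i j \<noteq> 0} \<subseteq> {..<N} \<times> {..<N}" using assms(1) by auto
  then have "(\<Sum>(i, j)\<in>{(i, j). c i j \<noteq> 0}. g i j) = (\<Sum>(i, j)\<in>{..<N} \<times> {..<N}. g i j)"
    by (intro sum.mono_neutral_left) (use assms(2) in auto)
  also have "\<dots> = (\<Sum>i<N. \<Sum>j<N. g i j)" by (simp add: sum.cartesian_product)
  finally show ?thesis .
qed

lemma sum_box_mono:
  fixes c g :: "nat \<Rightarrow> nat \<Rightarrow> real"
  assumes "\<And>i j. c i j \<noteq> 0 \<Longrightarrow> i < N \<and> j < N" and "N \<le> M" and "\<And>i j. c i j = 0 \<Longrightarrow> g i j = 0"
  shows "(\<Sum>i<M. \<Sum>j<M. g i j) = (\<Sum>i<N. \<Sum>j<N. g i j)"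
proof -
  have "\<And>i j. c i j \<noteq> 0 \<Longrightarrow> i < M \<and> j < M"
    using assms(1,2) by (meson order_less_le_trans)
  then show ?thesis
    using sum_support_eq_box[of c N g, OF assms(1,3)] sum_support_eq_box[of c M g] assms(3) by simp
qed

text \<open>The products \<open>(u choose j) (t choose i)\<close> are linearly independent: evaluate at a
  coefficient \<open>(i\<^sub>0, j\<^sub>0)\<close> of least total degree \<open>i\<^sub>0 + j\<^sub>0\<close>.\<close>
lemma binomial_basis_unique:
  assumes "finite S"
    and zero: "\<And>t u. (\<Sum>(i, j)\<in>S. d i j * real (u choose j) * real (t choose i)) = 0"
  shows "\<forall>(i, j)\<in>S. d i j = 0"
proof (rule ccontr)
  assume "\<not> ?thesis"
  then have "\<exists>p. p \<in> S \<and> d (fst p) (snd p) \<noteq> 0" by auto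
  then obtain p0 where p0: "p0 \<in> S \<and> d (fst p0) (snd p0) \<noteq> 0"
    and least: "\<And>q. q \<in> S \<and> d (fst q) (snd q) \<noteq> 0 \<Longrightarrow> fst p0 + snd p0 \<le> fst q + snd q"
    using ex_has_least_nat[of "\<lambda>p. p \<in> S \<and> d (fst p) (snd p) \<noteq> 0" _ "\<lambda>p. fst p + snd p"] by blast
  obtain i0 j0 where ij0: "p0 = (i0, j0)" by (cases p0)
  let ?g = "\<lambda>(i, j). d i j * real (j0 choose j) * real (i0 choose i)"
  have vanish: "?g q = 0" if "q \<in> S - {p0}" for q
  proof -
    obtain i j where q: "q = (i, j)" by (cases q)
    show ?thesis
    proof (cases "d i j = 0")
      case False
      then have "i0 + j0 \<le> i + j" using least[of q] that q ij0 by auto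
      moreover have "q \<noteq> p0" using that by auto
      ultimately have "i0 < i \<or> j0 < j" using q ij0 by auto
      then show ?thesis using q by auto
    qed (use q in simp)
  qed
  have "0 = (\<Sum>q\<in>S. ?g q)" using zero[where t = i0 and u = j0] by (simp add: case_prod_beta)
  also have "\<dots> = ?g p0 + (\<Sum>q\<in>S - {p0}. ?g q)" using p0 \<open>finite S\<close> by (simp add: sum.remove)
  also have "(\<Sum>q\<in>S - {p0}. ?g q) = 0" using vanish by (intro sum.neutral) auto
  finally show False using p0 ij0 by simp
qed

lemma binomial_coefficients_unique:
  fixes c c' :: "nat \<Rightarrow> nat \<Rightarrow> real"
  assumes "finite {(i, j). c i j \<noteq> 0}" and "finite {(i, j). c' i j \<noteq> 0}"
    and eq: "\<And>t u. (\<Sum>(i, j)\<in>{(i, j). c i j \<noteq> 0}. c i j * real (u choose j) * real (t choose i))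
      = (\<Sum>(i, j)\<in>{(i, j). c' i j \<noteq> 0}. c' i j * real (u choose j) * real (t choose i))"
  shows "c = c'"
proof -
  define S where "S = {(i, j). c i j \<noteq> 0} \<union> {(i, j). c' i j \<noteq> 0}"
  have "finite S" using assms(1,2) unfolding S_def by blast
  have on_S: "(\<Sum>(i, j)\<in>{(i, j). e i j \<noteq> 0}. e i j * real (u choose j) * real (t choose i))
      = (\<Sum>(i, j)\<in>S. e i j * real (u choose j) * real (t choose i))"
    if "{(i, j). e i j \<noteq> 0} \<subseteq> S" for e :: "nat \<Rightarrow> nat \<Rightarrow> real" and t u
    by (rule sum.mono_neutral_left) (use \<open>finite S\<close> that in auto)
  have "(\<Sum>(i, j)\<in>S. (c i j - c' i j) * real (u choose j) * real (t choose i)) = 0" for t u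
    using on_S[of c u t] on_S[of c' u t] eq[of u t]
    by (simp add: S_def case_prod_beta sum_subtractf left_diff_distrib)
  then have "\<forall>(i, j)\<in>S. c i j - c' i j = 0"
    using \<open>finite S\<close> by (intro binomial_basis_unique) blast
  then show "c = c'" unfolding S_def by (auto simp: fun_eq_iff)
qed

lemma Q_coeffs_eqI:
  assumes "binomial_expansion N c (\<lambda>t u. real (Q_count F P t u))"
  shows "Q_coeffs F P = c"
  unfolding Q_coeffs_def
proof (rule the_equality)
  have supp: "\<And>i j. c i j \<noteq> 0 \<Longrightarrow> i < N \<and> j < N"
    using binomial_expansion_support[OF assms] by blast
  have expand: "real (Q_count F P t u) =
      (\<Sum>(i, j)\<in>{(i, j). c i j \<noteq> 0}. c i j * real (u choose j) * real (t choose i))" for t u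
    using binomial_expansion_eq[OF assms] sum_support_eq_box[OF supp] by simp
  have fin_c: "finite {(i, j). c i j \<noteq> 0}"
    by (rule finite_subset[of _ "{..<N} \<times> {..<N}"]) (use supp in auto)
  show "finite {(i, j). c i j \<noteq> 0} \<and> (\<forall>t u. real (Q_count F P t u) =
      (\<Sum>(i, j)\<in>{(i, j). c i j \<noteq> 0}. c i j * real (u choose j) * real (t choose i)))"
    using fin_c expand by blast
  show "c' = c" if "finite {(i, j). c' i j \<noteq> 0} \<and> (\<forall>t u. real (Q_count F P t u) =
      (\<Sum>(i, j)\<in>{(i, j). c' i j \<noteq> 0}. c' i j * real (u choose j) * real (t choose i)))" for c'
    using that fin_c expand by (intro binomial_coefficients_unique) auto
qed

lemma Q_prime_eqI:
  assumes "binomial_expansion N c (\<lambda>t u. real (Q_count F P t u))"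
  shows "Q_prime F P x y = shifted_eval c N x y"
  unfolding Q_prime_def Q_coeffs_eqI[OF assms] shifted_eval_def
  by (rule sum_support_eq_box) (use binomial_expansion_support[OF assms] in auto)

lemma binomial_expansion_mono:
  assumes "binomial_expansion N c f" and "N \<le> M"
  shows "binomial_expansion M c f"
proof (rule binomial_expansionI)
  show "i < M \<and> j < M" if "c i j \<noteq> 0" for i j
    using binomial_expansion_support[OF assms(1) that] assms(2) by linarith
  show "f t u = (\<Sum>i<M. \<Sum>j<M. c i j * real (u choose j) * real (t choose i))" for t u
    using binomial_expansion_eq[OF assms(1)]
      sum_box_mono[OF binomial_expansion_support[OF assms(1)] assms(2),
        of "\<lambda>i j. c i j * real (u choose j) * real (t choose i)"]
    by simp
qed

lemma binomial_expansion_common_bound: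
  assumes "finite K" and "\<forall>k\<in>K. \<exists>N c. binomial_expansion N c (f k)"
  shows "\<exists>N. \<forall>k\<in>K. \<exists>c. binomial_expansion N c (f k)"
  using assms
proof (induction K rule: finite_induct)
  case (insert k K)
  then obtain N1 N2 c2 where "\<forall>k\<in>K. \<exists>c. binomial_expansion N1 c (f k)" "binomial_expansion N2 c2 (f k)"
    by auto
  then have "\<forall>k'\<in>insert k K. \<exists>c. binomial_expansion (max N1 N2) c (f k')"
    using binomial_expansion_mono[of _ _ _ "max N1 N2"] by (metis insert_iff max.cobounded1 max.cobounded2)
  then show ?case by blast
qed simp

lemma binomial_expansion_add:
  assumes "binomial_expansion N c f" and "binomial_expansion N d g"
  shows "binomial_expansion N (\<lambda>i j. c i j + d i j) (\<lambda>t u. f t u + g t u)"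
proof (rule binomial_expansionI)
  show "i < N \<and> j < N" if "c i j + d i j \<noteq> 0" for i j
  proof -
    have "c i j \<noteq> 0 \<or> d i j \<noteq> 0" using that by auto
    then show ?thesis
      using binomial_expansion_support[OF assms(1)] binomial_expansion_support[OF assms(2)] by blast
  qed
  show "f t u + g t u = (\<Sum>i<N. \<Sum>j<N. (c i j + d i j) * real (u choose j) * real (t choose i))" for t u
    using binomial_expansion_eq[OF assms(1)] binomial_expansion_eq[OF assms(2)]
    by (simp add: distrib_right sum.distrib)
qed

lemma binomial_expansion_sum:
  assumes "finite K" and "\<forall>k\<in>K. binomial_expansion N (c k) (f k)"
  shows "binomial_expansion N (\<lambda>i j. \<Sum>k\<in>K. c k i j) (\<lambda>t u. \<Sum>k\<in>K. f k t u)"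
  using assms
proof (induction K rule: finite_induct)
  case empty
  then show ?case by (simp add: binomial_expansion_def)
next
  case (insert k K)
  then show ?case using binomial_expansion_add[of N "c k" "f k"] by simp
qed

lemma binomial_expansion_swap:
  assumes "binomial_expansion N c f"
  shows "binomial_expansion N (\<lambda>i j. c j i) (\<lambda>t u. f u t)"
proof (rule binomial_expansionI)
  show "i < N \<and> j < N" if "c j i \<noteq> 0" for i j
    using binomial_expansion_support[OF assms that] by simp
  show "f u t = (\<Sum>i<N. \<Sum>j<N. c j i * real (u choose j) * real (t choose i))" for t u
    unfolding binomial_expansion_eq[OF assms, of u t]
    by (subst sum.swap) (simp add: mult_ac)
qed

lemma sum_lessThan_choose: "(\<Sum>s<t. s choose i) = t choose Suc i"
proof (cases t)
  case (Suc n)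
  then show ?thesis using sum_choose_upper[of i n] by (simp only: lessThan_Suc_atMost)
qed simp

lemma binomial_expansion_sum_fst:
  assumes "binomial_expansion N c f"
  shows "binomial_expansion (Suc N) (\<lambda>i j. if i = 0 then 0 else c (i - 1) j) (\<lambda>t u. \<Sum>s<t. f s u)"
proof (rule binomial_expansionI)
  show "i < Suc N \<and> j < Suc N" if "(if i = 0 then 0 else c (i - 1) j) \<noteq> 0" for i j
    using that binomial_expansion_support[OF assms, of "i - 1" j] by (auto split: if_splits)
  have hockey: "(\<Sum>s<t. real (s choose i)) = real (t choose Suc i)" for t i
    unfolding sum_lessThan_choose[symmetric] by simp
  have c_N: "c i N = 0" for i
    using binomial_expansion_support[OF assms, of i N] by auto
  fix t u
  have "(\<Sum>s<t. f s u) = (\<Sum>i<N. \<Sum>j<N. \<Sum>s<t. c i j * real (u choose j) * real (s choose i))"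
    unfolding binomial_expansion_eq[OF assms] by (subst sum.swap) (subst (2) sum.swap, rule refl)
  also have "\<dots> = (\<Sum>i<N. \<Sum>j<N. c i j * real (u choose j) * real (t choose Suc i))"
  proof (intro sum.cong refl)
    fix i j
    have "(\<Sum>s<t. c i j * real (u choose j) * real (s choose i))
        = c i j * real (u choose j) * (\<Sum>s<t. real (s choose i))"
      by (simp add: sum_distrib_left)
    then show "(\<Sum>s<t. c i j * real (u choose j) * real (s choose i))
        = c i j * real (u choose j) * real (t choose Suc i)"
      by (simp add: hockey)
  qed
  also have "\<dots> = (\<Sum>i<N. \<Sum>j<Suc N. c i j * real (u choose j) * real (t choose Suc i))"
    by (simp add: c_N)
  also have "\<dots> = (\<Sum>i<Suc N. \<Sum>j<Suc N.
      (if i = 0 then 0 else c (i - 1) j) * real (u choose j) * real (t choose i))"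
    by (subst sum.lessThan_Suc_shift) simp
  finally show "(\<Sum>s<t. f s u) = (\<Sum>i<Suc N. \<Sum>j<Suc N.
      (if i = 0 then 0 else c (i - 1) j) * real (u choose j) * real (t choose i))" .
qed

lemma binomial_expansion_sum_snd:
  assumes "binomial_expansion N c f"
  shows "binomial_expansion (Suc N) (\<lambda>i j. if j = 0 then 0 else c i (j - 1)) (\<lambda>t u. \<Sum>s<u. f t s)"
  using binomial_expansion_swap[OF binomial_expansion_sum_fst[OF binomial_expansion_swap[OF assms]]]
  by simp

lemma shifted_eval_mono:
  assumes "\<And>i j. c i j \<noteq> 0 \<Longrightarrow> i < N \<and> j < N" and "N \<le> M"
  shows "shifted_eval c M x y = shifted_eval c N x y"
  unfolding shifted_eval_def
  using sum_box_mono[OF assms, of "\<lambda>i j. c i j * (x - 1) ^ i * (y - 1) ^ j"] by simp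

lemma shifted_eval_add: "shifted_eval (\<lambda>i j. c i j + d i j) N x y = shifted_eval c N x y + shifted_eval d N x y"
  unfolding shifted_eval_def by (simp add: distrib_right sum.distrib)

lemma shifted_eval_sum:
  "finite K \<Longrightarrow> shifted_eval (\<lambda>i j. \<Sum>k\<in>K. c k i j) N x y = (\<Sum>k\<in>K. shifted_eval (c k) N x y)"
proof (induction K rule: finite_induct)
  case empty
  then show ?case by (simp add: shifted_eval_def)
next
  case (insert k K)
  then show ?case using shifted_eval_add[of "c k" "\<lambda>i j. \<Sum>k\<in>K. c k i j" N x y] by simp
qed

lemma shifted_eval_swap: "shifted_eval (\<lambda>i j. c j i) N x y = shifted_eval c N y x"
  unfolding shifted_eval_def by (subst sum.swap) (simp add: mult_ac)

lemma shifted_eval_shift_fst: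
  assumes "\<And>i j. c i j \<noteq> 0 \<Longrightarrow> i < N \<and> j < N"
  shows "shifted_eval (\<lambda>i j. if i = 0 then 0 else c (i - 1) j) (Suc N) x y = (x - 1) * shifted_eval c N x y"
proof -
  have c_N: "c i N = 0" for i using assms[of i N] by auto
  have "shifted_eval (\<lambda>i j. if i = 0 then 0 else c (i - 1) j) (Suc N) x y
      = (\<Sum>i<N. \<Sum>j<Suc N. c i j * ((x - 1) ^ Suc i * (y - 1) ^ j))"
    unfolding shifted_eval_def by (subst sum.lessThan_Suc_shift) (simp add: mult.assoc)
  also have "\<dots> = (\<Sum>i<N. \<Sum>j<N. c i j * ((x - 1) ^ Suc i * (y - 1) ^ j))"
    by (simp add: c_N)
  also have "\<dots> = (x - 1) * shifted_eval c N x y"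
    unfolding shifted_eval_def by (simp add: sum_distrib_left mult_ac)
  finally show ?thesis .
qed

lemma shifted_eval_shift_snd:
  assumes "\<And>i j. c i j \<noteq> 0 \<Longrightarrow> i < N \<and> j < N"
  shows "shifted_eval (\<lambda>i j. if j = 0 then 0 else c i (j - 1)) (Suc N) x y = (y - 1) * shifted_eval c N x y"
proof -
  have "shifted_eval (\<lambda>i j. if j = 0 then 0 else c i (j - 1)) (Suc N) x y
      = shifted_eval (\<lambda>i j. if i = 0 then 0 else c j (i - 1)) (Suc N) y x"
    using shifted_eval_swap[of "\<lambda>i j. if i = 0 then 0 else c j (i - 1)" "Suc N" x y] by simp
  also have "\<dots> = (y - 1) * shifted_eval (\<lambda>i j. c j i) N y x"
    using assms by (intro shifted_eval_shift_fst) blast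
  also have "\<dots> = (y - 1) * shifted_eval c N x y"
    by (simp only: shifted_eval_swap[of c N y x])
  finally show ?thesis .
qed

section \<open>Slicing a polymatroid at an element\<close>

definition slice_rank :: "('a set \<Rightarrow> int) \<Rightarrow> 'a \<Rightarrow> int \<Rightarrow> 'a set \<Rightarrow> int" where
  "slice_rank r a k S = min (r S) (r (insert a S) - k)"

locale pointed_polymatroid =
  fixes E :: "'a::finite set" and r :: "'a set \<Rightarrow> int" and a :: 'a
  assumes polymatroid: "polymatroid E r" and card_ge_2: "2 \<le> card E" and a_in_E: "a \<in> E"
begin

abbreviation "E' \<equiv> E - {a}"
abbreviation "k_min \<equiv> r E - r (E - {a})"
abbreviation "k_max \<equiv> r {a}"

lemma rank_empty: "r {} = 0"
  using polymatroid unfolding polymatroid_def by blast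

lemma rank_mono: "X \<subseteq> Y \<Longrightarrow> Y \<subseteq> E \<Longrightarrow> r X \<le> r Y"
  using polymatroid unfolding polymatroid_def by blast

lemma rank_nonneg: "X \<subseteq> E \<Longrightarrow> 0 \<le> r X"
  using polymatroid unfolding polymatroid_def by blast

lemma rank_submodular: "X \<subseteq> E \<Longrightarrow> Y \<subseteq> E \<Longrightarrow> r (X \<union> Y) + r (X \<inter> Y) \<le> r X + r Y"
  using polymatroid unfolding polymatroid_def by blast

lemma E'_nonempty: "E' \<noteq> {}"
proof
  assume "E' = {}"
  then have "E \<subseteq> {a}" by blast
  then have "card E \<le> 1" using card_mono[of "{a}" E] by simp
  then show False using card_ge_2 by simp
qed

lemma E_nonempty: "E \<noteq> {}"
  using a_in_E by blast

lemma E_eq: "insert a E' = E"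
  using a_in_E by blast

lemma rank_insert_le:
  assumes "S \<subseteq> E'"
  shows "r (insert a S) \<le> r S + k_max"
proof -
  have "S \<union> {a} = insert a S" "S \<inter> {a} = {}" using assms by auto
  then show ?thesis using rank_submodular[of S "{a}"] assms a_in_E rank_empty by auto
qed

lemma rank_insert_ge:
  assumes "S \<subseteq> E'"
  shows "k_min \<le> r (insert a S) - r S"
proof -
  have "insert a S \<union> E' = E" "insert a S \<inter> E' = S" using assms a_in_E by auto
  moreover have "insert a S \<subseteq> E" using assms a_in_E by blast
  ultimately have "r E + r S \<le> r (insert a S) + r E'" using rank_submodular[of "insert a S" E'] by simp
  then show ?thesis by linarith
qed

lemma k_min_le_k_max: "k_min \<le> k_max"
  using rank_insert_ge[of "{}"] rank_empty by simp

lemma minkowski_rank_values: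
  "minkowski_rank E r t u {} = 0"
  "S \<subseteq> E' \<Longrightarrow> S \<noteq> {} \<Longrightarrow> minkowski_rank E r t u S = r S + int u"
  "S \<subseteq> E' \<Longrightarrow> S \<noteq> E' \<Longrightarrow> minkowski_rank E r t u (insert a S) = r (insert a S) + int u"
  "minkowski_rank E r t u {a} = k_max + int u"
  "minkowski_rank E r t u E' = r E' + int u"
  "minkowski_rank E r t u E = r E + int u - int t"
  using a_in_E E'_nonempty rank_empty by (auto simp: minkowski_rank_def)

lemma minkowski_slice_rank_values:
  "k \<le> k_max \<Longrightarrow> minkowski_rank E' (slice_rank r a k) t u {} = 0"
  "S \<noteq> {} \<Longrightarrow> S \<noteq> E' \<Longrightarrow> minkowski_rank E' (slice_rank r a k) t u S = slice_rank r a k S + int u"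
  "minkowski_rank E' (slice_rank r a k) t u E' = min (r E') (r E - k) + int u - int t"
  using E'_nonempty E_eq rank_empty by (auto simp: minkowski_rank_def slice_rank_def)

lemma fibre_rank_slice:
  assumes "k_min \<le> k" "k \<le> k_max"
  shows "fibre_rank E a (minkowski_rank E r t u) k (minkowski_rank E' (slice_rank r a k) t u)"
  unfolding fibre_rank_def
proof (intro conjI allI impI)
  fix S assume "S \<subseteq> E'" "S \<noteq> {}" "S \<noteq> E'"
  then show "minkowski_rank E' (slice_rank r a k) t u S
      = min (minkowski_rank E r t u S) (minkowski_rank E r t u (insert a S) - k)"
    by (simp add: minkowski_rank_values minkowski_slice_rank_values slice_rank_def)
qed (use assms in \<open>auto simp: minkowski_rank_values minkowski_slice_rank_values\<close>)

lemma fibre_rank_above: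
  assumes "1 \<le> j" "j \<le> u"
  shows "fibre_rank E a (minkowski_rank E r t u) (k_max + int j)
           (minkowski_rank E' (slice_rank r a k_max) t (u - j))"
  unfolding fibre_rank_def
proof (intro conjI allI impI)
  fix S assume S: "S \<subseteq> E'" "S \<noteq> {}" "S \<noteq> E'"
  then show "minkowski_rank E' (slice_rank r a k_max) t (u - j) S
      = min (minkowski_rank E r t u S) (minkowski_rank E r t u (insert a S) - (k_max + int j))"
    using rank_insert_le[OF S(1)] assms
    by (simp add: minkowski_rank_values minkowski_slice_rank_values slice_rank_def of_nat_diff)
qed (use assms rank_insert_le[of E'] E_eq k_min_le_k_max in
      \<open>auto simp: minkowski_rank_values minkowski_slice_rank_values of_nat_diff\<close>)

lemma fibre_rank_below:
  assumes "1 \<le> j" "j \<le> t"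
  shows "fibre_rank E a (minkowski_rank E r t u) (k_min - int j)
           (minkowski_rank E' (slice_rank r a k_min) (t - j) u)"
  unfolding fibre_rank_def
proof (intro conjI allI impI)
  fix S assume S: "S \<subseteq> E'" "S \<noteq> {}" "S \<noteq> E'"
  then show "minkowski_rank E' (slice_rank r a k_min) (t - j) u S
      = min (minkowski_rank E r t u S) (minkowski_rank E r t u (insert a S) - (k_min - int j))"
    using rank_insert_ge[OF S(1)] assms
    by (simp add: minkowski_rank_values minkowski_slice_rank_values slice_rank_def)
qed (use assms k_min_le_k_max in
      \<open>auto simp: minkowski_rank_values minkowski_slice_rank_values of_nat_diff\<close>)

abbreviation slice_count :: "int \<Rightarrow> nat \<Rightarrow> nat \<Rightarrow> nat" where
  "slice_count k t u \<equiv> card (pm_bases E' (minkowski_rank E' (slice_rank r a k) t u))"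

lemma card_fibre:
  assumes "fibre_rank E a (minkowski_rank E r t u) m G"
  shows "card {z \<in> pm_bases E (minkowski_rank E r t u). z a = m} = card (pm_bases E' G)"
  using bij_betw_fibre_pm_bases[OF assms finite a_in_E] by (rule bij_betw_same_card)

lemma card_pm_bases_recursion:
  "card (pm_bases E (minkowski_rank E r t u)) =
     (\<Sum>s<t. slice_count k_min s u) + (\<Sum>s<u. slice_count k_max t s) + (\<Sum>k = k_min..k_max. slice_count k t u)"
proof -
  let ?B = "pm_bases E (minkowski_rank E r t u)"
  let ?fibre = "\<lambda>m. card {z \<in> ?B. z a = m}"
  have "z a \<in> {k_min - int t..k_max + int u}" if "z \<in> ?B" for z
    using pm_bases_coordinate_bounds[OF finite a_in_E that] by (simp add: minkowski_rank_values)
  then have "?B = (\<Union>m\<in>{k_min - int t..k_max + int u}. {z \<in> ?B. z a = m})"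
    by blast
  also have "card \<dots> = (\<Sum>m\<in>{k_min - int t..k_max + int u}. ?fibre m)"
    by (rule card_UN_disjoint) (auto simp: finite_pm_bases)
  finally have "card ?B = (\<Sum>m\<in>{k_min - int t..k_max + int u}. ?fibre m)" .
  also have "\<dots> = (\<Sum>m\<in>{k_min - int t..<k_min}. ?fibre m) + (\<Sum>m\<in>{k_min..k_max}. ?fibre m)
                  + (\<Sum>m\<in>{k_max<..k_max + int u}. ?fibre m)"
    using k_min_le_k_max by (rule sum_int_interval_split)
  also have "(\<Sum>m\<in>{k_min - int t..<k_min}. ?fibre m) = (\<Sum>s<t. slice_count k_min s u)"
    unfolding sum_int_interval_below
  proof (rule sum.cong)
    fix s assume "s \<in> {..<t}"
    then show "?fibre (k_min - int (t - s)) = slice_count k_min s u"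
      using card_fibre[OF fibre_rank_below, of "t - s" t u] by simp
  qed simp
  also have "(\<Sum>m\<in>{k_max<..k_max + int u}. ?fibre m) = (\<Sum>s<u. slice_count k_max t s)"
    unfolding sum_int_interval_above
  proof (rule sum.cong)
    fix s assume "s \<in> {..<u}"
    then show "?fibre (k_max + int (u - s)) = slice_count k_max t s"
      using card_fibre[OF fibre_rank_above, of "u - s" u t] by simp
  qed simp
  also have "(\<Sum>m\<in>{k_min..k_max}. ?fibre m) = (\<Sum>k = k_min..k_max. slice_count k t u)"
    using card_fibre[OF fibre_rank_slice] by (intro sum.cong refl) simp
  finally show ?thesis by simp
qed

lemma polymatroid_slice_rank:
  assumes "k_min \<le> k" "k \<le> k_max"
  shows "polymatroid E' (slice_rank r a k)"
  unfolding polymatroid_def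
proof (intro conjI allI impI)
  show "finite E'" by simp
  show "slice_rank r a k {} = 0"
    using rank_empty assms by (simp add: slice_rank_def)
next
  fix X assume X: "X \<subseteq> E'"
  have "r {a} \<le> r (insert a X)" using X a_in_E by (intro rank_mono) auto
  moreover have "0 \<le> r X" using X by (intro rank_nonneg) auto
  ultimately show "0 \<le> slice_rank r a k X"
    using assms by (simp add: slice_rank_def)
next
  fix X Y assume XY: "X \<subseteq> Y \<and> Y \<subseteq> E'"
  have "r X \<le> r Y" "r (insert a X) \<le> r (insert a Y)" using XY a_in_E by (auto intro!: rank_mono)
  then show "slice_rank r a k X \<le> slice_rank r a k Y" by (auto simp: slice_rank_def)
next
  fix X Y assume XY: "X \<subseteq> E' \<and> Y \<subseteq> E'"
  then have XY': "X \<subseteq> E" "Y \<subseteq> E" "insert a X \<subseteq> E" "insert a Y \<subseteq> E" using a_in_E by auto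
  have "insert a X \<union> insert a Y = insert a (X \<union> Y)" "insert a X \<inter> insert a Y = insert a (X \<inter> Y)"
    "X \<union> insert a Y = insert a (X \<union> Y)" "X \<inter> insert a Y = X \<inter> Y"
    "insert a X \<union> Y = insert a (X \<union> Y)" "insert a X \<inter> Y = X \<inter> Y"
    using XY by auto
  then have "r (X \<union> Y) + r (X \<inter> Y) \<le> r X + r Y"
    "r (insert a (X \<union> Y)) + r (insert a (X \<inter> Y)) \<le> r (insert a X) + r (insert a Y)"
    "r (insert a (X \<union> Y)) + r (X \<inter> Y) \<le> r X + r (insert a Y)"
    "r (insert a (X \<union> Y)) + r (X \<inter> Y) \<le> r (insert a X) + r Y"
    using rank_submodular[of X Y] rank_submodular[of "insert a X" "insert a Y"]
      rank_submodular[of X "insert a Y"] rank_submodular[of "insert a X" Y] XY' by simp_all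
  \<comment> \<open>each of the four choices of minimum for \<open>X\<close> and \<open>Y\<close> is covered by one of these inequalities\<close>
  then show "slice_rank r a k (X \<union> Y) + slice_rank r a k (X \<inter> Y) \<le> slice_rank r a k X + slice_rank r a k Y"
    unfolding slice_rank_def by linarith
qed

lemma slice_polytope_eq:
  assumes "k_min \<le> k" "k \<le> k_max"
  shows "slice_polytope E r a k = base_polytope E' (slice_rank r a k)"
proof -
  have "linear (proj_away a)"
    by (rule linearI) (auto simp: proj_away_def vec_eq_iff)
  have proj_int_vec: "proj_away a (int_vec z) = int_vec (z(a := 0))" for z
    by (auto simp: proj_away_def int_vec_def vec_eq_iff)
  have "(\<lambda>z. z(a := 0)) ` {z \<in> pm_bases E r. z a = k} = pm_bases E' (slice_rank r a k)"
    using bij_betw_imp_surj_on[OF bij_betw_fibre_pm_bases[OF fibre_rank_slice[OF assms, of 0 0] finite a_in_E]]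
    by simp
  then have "proj_away a ` int_vec ` {z \<in> pm_bases E r. z a = k} = int_vec ` pm_bases E' (slice_rank r a k)"
    by (metis (no_types, lifting) image_cong image_image proj_int_vec)
  then show ?thesis
    unfolding slice_polytope_def base_polytope_def convex_hull_linear_image[OF \<open>linear (proj_away a)\<close>]
    by simp
qed

lemma card_E': "card E' < card E"
  using finite a_in_E by (rule card_Diff1_less)

lemma obtain_slice_count_expansions:
  assumes "\<And>k. k_min \<le> k \<Longrightarrow> k \<le> k_max \<Longrightarrow> \<exists>N c. binomial_expansion N c (\<lambda>t u. real (slice_count k t u))"
  obtains N C where "\<forall>k\<in>{k_min..k_max}. binomial_expansion N (C k) (\<lambda>t u. real (slice_count k t u))"
proof -
  obtain N where "\<forall>k\<in>{k_min..k_max}. \<exists>c. binomial_expansion N c (\<lambda>t u. real (slice_count k t u))"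
    using binomial_expansion_common_bound[of "{k_min..k_max}"] assms by fastforce
  then show ?thesis using that by metis
qed

lemma binomial_expansion_card_pm_bases_step:
  assumes C: "\<forall>k\<in>{k_min..k_max}. binomial_expansion N (C k) (\<lambda>t u. real (slice_count k t u))"
  shows "binomial_expansion (Suc N)
     (\<lambda>i j. (if i = 0 then 0 else C k_min (i - 1) j) + (if j = 0 then 0 else C k_max i (j - 1))
            + (\<Sum>k = k_min..k_max. C k i j))
     (\<lambda>t u. real (card (pm_bases E (minkowski_rank E r t u))))"
proof -
  have "k_min \<in> {k_min..k_max}" "k_max \<in> {k_min..k_max}"
    using k_min_le_k_max by auto
  then have "binomial_expansion (Suc N) (\<lambda>i j. if i = 0 then 0 else C k_min (i - 1) j)
      (\<lambda>t u. \<Sum>s<t. real (slice_count k_min s u))"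
    "binomial_expansion (Suc N) (\<lambda>i j. if j = 0 then 0 else C k_max i (j - 1))
      (\<lambda>t u. \<Sum>s<u. real (slice_count k_max t s))"
    using binomial_expansion_sum_fst[of N "C k_min"] binomial_expansion_sum_snd[of N "C k_max"] C
    by blast+
  moreover have "binomial_expansion (Suc N) (\<lambda>i j. \<Sum>k = k_min..k_max. C k i j)
      (\<lambda>t u. \<Sum>k = k_min..k_max. real (slice_count k t u))"
    by (rule binomial_expansion_mono[OF binomial_expansion_sum[OF _ C]]) simp_all
  ultimately show ?thesis
    using binomial_expansion_add[OF binomial_expansion_add] by (simp add: card_pm_bases_recursion)
qed

end

lemma polymatroid_slice_induct [consumes 2, case_names singleton slices]:
  fixes E :: "'a::finite set"
  assumes "polymatroid E r" and "E \<noteq> {}"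
    and singleton: "\<And>e r. polymatroid {e} r \<Longrightarrow> P {e} r"
    and slices: "\<And>E r a. pointed_polymatroid E r a \<Longrightarrow>
       (\<And>k. r E - r (E - {a}) \<le> k \<Longrightarrow> k \<le> r {a} \<Longrightarrow> P (E - {a}) (slice_rank r a k)) \<Longrightarrow> P E r"
  shows "P E r"
  using assms(1,2)
proof (induction "card E" arbitrary: E r rule: less_induct)
  case less
  show ?case
  proof (cases "card E = 1")
    case True
    then obtain e where "E = {e}" by (auto simp: card_1_singleton_iff)
    then show ?thesis using singleton less.prems(1) by blast
  next
    case False
    moreover have "card E \<noteq> 0" using less.prems(2) by simp
    ultimately have "2 \<le> card E" by linarith
    obtain a where "a \<in> E" using less.prems(2) by blast
    then have "pointed_polymatroid E r a"
      using less.prems(1) \<open>2 \<le> card E\<close> by unfold_locales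
    then interpret pointed_polymatroid E r a .
    show ?thesis
      by (rule slices[OF \<open>pointed_polymatroid E r a\<close>])
        (use less.hyps[OF card_E'] polymatroid_slice_rank E'_nonempty in blast)
  qed
qed

lemma binomial_expansion_card_pm_bases:
  fixes E :: "'a::finite set"
  assumes "polymatroid E r" and "E \<noteq> {}"
  shows "\<exists>N c. binomial_expansion N c (\<lambda>t u. real (card (pm_bases E (minkowski_rank E r t u))))"
  using assms
proof (induction rule: polymatroid_slice_induct)
  case (singleton e r)
  then have "r {} = 0" unfolding polymatroid_def by blast
  then have "card (pm_bases {e} (minkowski_rank {e} r t u)) = 1" for t u
    using pm_bases_singleton[of "minkowski_rank {e} r t u" e] minkowski_rank_empty[of "{e}" r t u]
    by simp
  then have "binomial_expansion 1 (\<lambda>i j. of_bool (i = 0 \<and> j = 0))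
      (\<lambda>t u. real (card (pm_bases {e} (minkowski_rank {e} r t u))))"
    by (intro binomial_expansionI) auto
  then show ?case by blast
next
  case (slices E r a)
  interpret pointed_polymatroid E r a by fact
  obtain N C where "\<forall>k\<in>{k_min..k_max}. binomial_expansion N (C k) (\<lambda>t u. real (slice_count k t u))"
    using slices(2) by (rule obtain_slice_count_expansions)
  then show ?case by (blast dest: binomial_expansion_card_pm_bases_step)
qed

lemma pm_bases_nonempty:
  fixes E :: "'a::finite set"
  assumes "polymatroid E r" and "E \<noteq> {}"
  shows "pm_bases E r \<noteq> {}"
  using assms
proof (induction rule: polymatroid_slice_induct)
  case (singleton e r)
  then have "r {} = 0" unfolding polymatroid_def by blast
  then show ?case using pm_bases_singleton[of r e] by simp
next
  case (slices E r a)
  interpret pointed_polymatroid E r a by fact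
  have "0 < slice_count k_min 0 0"
    using slices(2) k_min_le_k_max by (simp add: card_gt_0_iff finite_pm_bases)
  also have "\<dots> \<le> (\<Sum>k = k_min..k_max. slice_count k 0 0)"
    by (rule member_le_sum) (use k_min_le_k_max in auto)
  also have "\<dots> = card (pm_bases E r)"
    using card_pm_bases_recursion[of 0 0] by simp
  finally show ?case by auto
qed

context pointed_polymatroid
begin

lemma exists_base_with_coordinate:
  assumes "k_min \<le> k" "k \<le> k_max"
  shows "\<exists>b\<in>pm_bases E r. b a = k"
proof -
  have "pm_bases E' (slice_rank r a k) \<noteq> {}"
    using pm_bases_nonempty[OF polymatroid_slice_rank[OF assms] E'_nonempty] .
  then show ?thesis
    using bij_betw_imp_surj_on[OF bij_betw_fibre_pm_bases[OF fibre_rank_slice[OF assms, of 0 0] finite a_in_E]]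
    by auto
qed

lemma base_polytope_coordinate_bounds:
  assumes "p \<in> base_polytope E r"
  shows "k_min \<le> p $ a" and "p $ a \<le> k_max"
proof -
  have "(\<Sum>i\<in>E. p $ i) = p $ a + (\<Sum>i\<in>E'. p $ i)"
    using finite a_in_E by (rule sum.remove)
  then show "k_min \<le> p $ a"
    using base_polytope_sum_eq[OF assms] base_polytope_sum_le[OF assms, of E'] by simp
  show "p $ a \<le> k_max"
    using base_polytope_sum_le[OF assms, of "{a}"] a_in_E by simp
qed

lemma k_min_eqI:
  assumes "\<exists>p\<in>base_polytope E r. p $ a = real_of_int k" and "\<forall>p\<in>base_polytope E r. real_of_int k \<le> p $ a"
  shows "k = k_min"
proof -
  obtain b where "b \<in> pm_bases E r" "b a = k_min"
    using exists_base_with_coordinate k_min_le_k_max by blast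
  then have "real_of_int k \<le> int_vec b $ a"
    using assms(2) int_vec_in_base_polytope by blast
  then have "real_of_int k \<le> k_min"
    using \<open>b a = k_min\<close> by (simp add: int_vec_def)
  moreover obtain p where "p \<in> base_polytope E r" "p $ a = real_of_int k"
    using assms(1) by blast
  then have "k_min \<le> real_of_int k"
    using base_polytope_coordinate_bounds(1) by metis
  ultimately show ?thesis by linarith
qed

lemma k_max_eqI:
  assumes "\<exists>p\<in>base_polytope E r. p $ a = real_of_int k" and "\<forall>p\<in>base_polytope E r. p $ a \<le> real_of_int k"
  shows "k = k_max"
proof -
  obtain b where "b \<in> pm_bases E r" "b a = k_max"
    using exists_base_with_coordinate k_min_le_k_max by blast
  then have "int_vec b $ a \<le> real_of_int k"
    using assms(2) int_vec_in_base_polytope by blast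
  then have "k_max \<le> real_of_int k"
    using \<open>b a = k_max\<close> by (simp add: int_vec_def)
  moreover obtain p where "p \<in> base_polytope E r" "p $ a = real_of_int k"
    using assms(1) by blast
  then have "real_of_int k \<le> k_max"
    using base_polytope_coordinate_bounds(2) by metis
  ultimately show ?thesis by linarith
qed

lemma Q_prime_base_polytope_recursion:
  "Q_prime E (base_polytope E r) x y =
     (x - 1) * Q_prime E' (slice_polytope E r a k_min) x y
   + (y - 1) * Q_prime E' (slice_polytope E r a k_max) x y
   + (\<Sum>k = k_min..k_max. Q_prime E' (slice_polytope E r a k) x y)"
proof -
  obtain N C where C: "\<forall>k\<in>{k_min..k_max}. binomial_expansion N (C k) (\<lambda>t u. real (slice_count k t u))"
    using binomial_expansion_card_pm_bases[OF polymatroid_slice_rank E'_nonempty]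
    by (rule obtain_slice_count_expansions)
  have support: "\<And>i j. C k i j \<noteq> 0 \<Longrightarrow> i < N \<and> j < N" if "k \<in> {k_min..k_max}" for k
    using C that binomial_expansion_support by blast
  have slice: "Q_prime E' (slice_polytope E r a k) x y = shifted_eval (C k) N x y"
    if "k \<in> {k_min..k_max}" for k
    using C that Q_count_base_polytope[OF polymatroid_slice_rank E'_nonempty]
    by (auto intro!: Q_prime_eqI simp: slice_polytope_eq)
  have "k_min \<in> {k_min..k_max}" "k_max \<in> {k_min..k_max}"
    using k_min_le_k_max by auto
  have "Q_prime E (base_polytope E r) x y = shifted_eval
     (\<lambda>i j. (if i = 0 then 0 else C k_min (i - 1) j) + (if j = 0 then 0 else C k_max i (j - 1))
            + (\<Sum>k = k_min..k_max. C k i j)) (Suc N) x y"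
    using binomial_expansion_card_pm_bases_step[OF C] Q_count_base_polytope[OF polymatroid E_nonempty]
    by (intro Q_prime_eqI) simp
  also have "\<dots> = (x - 1) * shifted_eval (C k_min) N x y + (y - 1) * shifted_eval (C k_max) N x y
      + (\<Sum>k = k_min..k_max. shifted_eval (C k) (Suc N) x y)"
    using shifted_eval_shift_fst[of "C k_min" N x y, OF support[OF \<open>k_min \<in> _\<close>]]
      shifted_eval_shift_snd[of "C k_max" N x y, OF support[OF \<open>k_max \<in> _\<close>]]
    by (simp add: shifted_eval_add shifted_eval_sum)
  also have "(\<Sum>k = k_min..k_max. shifted_eval (C k) (Suc N) x y) = (\<Sum>k = k_min..k_max. shifted_eval (C k) N x y)"
  proof (rule sum.cong[OF refl])
    fix k assume "k \<in> {k_min..k_max}"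
    show "shifted_eval (C k) (Suc N) x y = shifted_eval (C k) N x y"
      using shifted_eval_mono[of "C k" N "Suc N", OF support[OF \<open>k \<in> _\<close>]] by simp
  qed
  finally show ?thesis
    using slice \<open>k_min \<in> _\<close> \<open>k_max \<in> _\<close> by simp
qed

end

theorem mainTheorem14:
  fixes E :: "'a::finite set" and r :: "'a set \<Rightarrow> int" and a :: 'a
    and klo khi :: int and x y :: real
  assumes "polymatroid E r" and "card E \<ge> 2" and "a \<in> E"
    and "\<exists>p\<in>base_polytope E r. p $ a = real_of_int klo"
    and "\<forall>p\<in>base_polytope E r. real_of_int klo \<le> p $ a"
    and "\<exists>p\<in>base_polytope E r. p $ a = real_of_int khi"
    and "\<forall>p\<in>base_polytope E r. p $ a \<le> real_of_int khi"
  shows "Q_prime E (base_polytope E r) x y =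
           (x - 1) * Q_prime (E - {a}) (slice_polytope E r a klo) x y
         + (y - 1) * Q_prime (E - {a}) (slice_polytope E r a khi) x y
         + (\<Sum>k = klo..khi. Q_prime (E - {a}) (slice_polytope E r a k) x y)"
proof -
  interpret pointed_polymatroid E r a
    using assms(1-3) by unfold_locales
  have "klo = k_min" using assms(4,5) by (rule k_min_eqI)
  moreover have "khi = k_max" using assms(6,7) by (rule k_max_eqI)
  ultimately show ?thesis using Q_prime_base_polytope_recursion by simp
qed

end
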